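(* For any finite poset $(X,\leqslant)$ and any derivation out-tree $T=(X,E)$, the pair $(T,\phi_E)$ is a tree-based enforcement scheme.
   Context: For a digraph $G$, $x\rightsquigarrow_G y$ means there is a directed path from $x$ to $y$ in $G$ (with $x\rightsquigarrow_G x$ always). A derivation out-tree for $(X,\leqslant)$ is a spanning out-tree $T=(X,E)$ (rooted tree on vertex set $X$ with arcs oriented away from the root) such that $xy\in E$ implies $y<x$; its root $r$ is the maximum element of $X$. Define $\phi_E\colon X\to2^X$ by $\phi_E(r)=\{r\}$ and, for $x\neq r$, $\phi_E(x)=\{z\in X:\exists y\in X \text{ with } yz\in E,\ x\geqslant z,\ x\not\geqslant y\}$. A tree-based enforcement scheme is a pair $(T,\phi)$ with $T$ a derivation out-tree and $\phi\colon X\to2^X$ such that for all $x\in X$: $x\in\phi(x)$; if $u\leqslant x$ then some $z\in\phi(x)$ has $z\rightsquigarrow_T u$; if $u\not\leqslant x$ then no $z\in\phi(x)$ has $z\rightsquigarrow_T u$. *)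

theory Defs
  imports Main
begin

definition partial_order_on_set :: "'a set \<Rightarrow> ('a \<Rightarrow> 'a \<Rightarrow> bool) \<Rightarrow> bool" where
  "partial_order_on_set X le \<longleftrightarrow>
     (\<forall>x\<in>X. le x x) \<and>
     (\<forall>x\<in>X. \<forall>y\<in>X. le x y \<and> le y x \<longrightarrow> x = y) \<and>
     (\<forall>x\<in>X. \<forall>y\<in>X. \<forall>z\<in>X. le x y \<and> le y z \<longrightarrow> le x z)"

definition reach :: "('a \<times> 'a) set \<Rightarrow> 'a \<Rightarrow> 'a \<Rightarrow> bool" where
  "reach E x y \<longleftrightarrow> (x, y) \<in> E\<^sup>*"

definition spanning_out_tree :: "'a set \<Rightarrow> ('a \<times> 'a) set \<Rightarrow> 'a \<Rightarrow> bool" where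
  "spanning_out_tree X E r \<longleftrightarrow>
     E \<subseteq> X \<times> X \<and> r \<in> X \<and>
     (\<forall>y. (y, r) \<notin> E) \<and>
     (\<forall>x\<in>X. x \<noteq> r \<longrightarrow> (\<exists>!y. (y, x) \<in> E)) \<and>
     (\<forall>x\<in>X. reach E r x)"

definition derivation_out_tree :: "'a set \<Rightarrow> ('a \<Rightarrow> 'a \<Rightarrow> bool) \<Rightarrow> ('a \<times> 'a) set \<Rightarrow> 'a \<Rightarrow> bool" where
  "derivation_out_tree X le E r \<longleftrightarrow>
     spanning_out_tree X E r \<and> (\<forall>(x, y)\<in>E. le y x \<and> y \<noteq> x)"

definition phi_E :: "'a set \<Rightarrow> ('a \<Rightarrow> 'a \<Rightarrow> bool) \<Rightarrow> ('a \<times> 'a) set \<Rightarrow> 'a \<Rightarrow> 'a \<Rightarrow> 'a set" where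
  "phi_E X le E r x =
     (if x = r then {r}
      else {z \<in> X. \<exists>y\<in>X. (y, z) \<in> E \<and> le z x \<and> \<not> le y x})"

definition tree_based_enforcement_scheme ::
  "'a set \<Rightarrow> ('a \<Rightarrow> 'a \<Rightarrow> bool) \<Rightarrow> ('a \<times> 'a) set \<Rightarrow> 'a \<Rightarrow> ('a \<Rightarrow> 'a set) \<Rightarrow> bool" where
  "tree_based_enforcement_scheme X le E r \<phi> \<longleftrightarrow>
     derivation_out_tree X le E r \<and>
     (\<forall>x\<in>X. \<phi> x \<subseteq> X) \<and>
     (\<forall>x\<in>X. x \<in> \<phi> x \<and>
        (\<forall>u\<in>X. le u x \<longrightarrow> (\<exists>z\<in>\<phi> x. reach E z u)) \<and>
        (\<forall>u\<in>X. \<not> le u x \<longrightarrow> \<not> (\<exists>z\<in>\<phi> x. reach E z u)))"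

end

theory Submission
  imports Defs
begin

text \<open>Every vertex lies below the root, so a path from the root to a vertex u \<le> x (x \<noteq> r)
  starts outside the down-set of x and ends inside it; the arc by which it first enters
  the down-set ends in an element of phi_E x. Conversely, everything reachable from
  z \<in> phi_E x lies below z \<le> x, because arcs descend in the order.\<close>

lemma rtrancl_first_entry:
  assumes "(a, u) \<in> R\<^sup>*" and "\<not> P a" and "P u"
  shows "\<exists>y z. (y, z) \<in> R \<and> \<not> P y \<and> P z \<and> (z, u) \<in> R\<^sup>*"
  using assms
proof (induction rule: rtrancl_induct)
  case base
  then show ?case by simp
next
  case (step w v)
  show ?case
  proof (cases "P w")
    case True
    then show ?thesis using step by (meson rtrancl_into_rtrancl)
  next
    case False
    then show ?thesis using step by blast
  qed
qed

lemma rtrancl_descending_le: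
  assumes po: "partial_order_on_set X le"
    and E: "E \<subseteq> X \<times> X" and desc: "\<forall>(x, y)\<in>E. le y x"
    and z: "z \<in> X" and path: "(z, u) \<in> E\<^sup>*"
  shows "u \<in> X \<and> le u z"
  using path
proof (induction rule: rtrancl_induct)
  case base
  then show ?case using z po unfolding partial_order_on_set_def by blast
next
  case (step w v)
  then have "v \<in> X" "le v w" using E desc by auto
  then show ?case using step z po unfolding partial_order_on_set_def by blast
qed

context
  fixes X :: "'a set" and le :: "'a \<Rightarrow> 'a \<Rightarrow> bool" and E :: "('a \<times> 'a) set" and r :: 'a
  assumes po: "partial_order_on_set X le"
    and dt: "derivation_out_tree X le E r"
begin

private lemma arcs_in_X: "E \<subseteq> X \<times> X"
  and arc_descends: "(x, y) \<in> E \<Longrightarrow> le y x \<and> y \<noteq> x"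
  and root_in_X: "r \<in> X"
  and parent_exists: "x \<in> X \<Longrightarrow> x \<noteq> r \<Longrightarrow> \<exists>y. (y, x) \<in> E"
  and reach_from_root: "x \<in> X \<Longrightarrow> (r, x) \<in> E\<^sup>*"
  using dt unfolding derivation_out_tree_def spanning_out_tree_def reach_def by auto

private lemma reach_le: "z \<in> X \<Longrightarrow> (z, u) \<in> E\<^sup>* \<Longrightarrow> u \<in> X \<and> le u z"
  using rtrancl_descending_le[OF po arcs_in_X _] arc_descends by blast

private lemma le_root: "u \<in> X \<Longrightarrow> le u r"
  using reach_le[OF root_in_X reach_from_root] by blast

private lemma phi_E_nonroot:
  "x \<noteq> r \<Longrightarrow> phi_E X le E r x = {z \<in> X. \<exists>y\<in>X. (y, z) \<in> E \<and> le z x \<and> \<not> le y x}"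
  unfolding phi_E_def by simp

lemma phi_E_subset: "phi_E X le E r x \<subseteq> X"
  using root_in_X unfolding phi_E_def by auto

lemma self_mem_phi_E:
  assumes x: "x \<in> X"
  shows "x \<in> phi_E X le E r x"
proof (cases "x = r")
  case False
  then obtain y where y: "(y, x) \<in> E" using parent_exists x by blast
  then have "y \<in> X" "le x y" "x \<noteq> y" using arcs_in_X arc_descends by auto
  then have "\<not> le y x" using po x unfolding partial_order_on_set_def by blast
  moreover have "le x x" using po x unfolding partial_order_on_set_def by blast
  ultimately show ?thesis using phi_E_nonroot[OF False] x y \<open>y \<in> X\<close> by auto
qed (simp add: phi_E_def)

lemma le_imp_reach_from_phi_E:
  assumes x: "x \<in> X" and u: "u \<in> X" "le u x"
  shows "\<exists>z\<in>phi_E X le E r x. reach E z u"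
proof (cases "x = r")
  case True
  then show ?thesis using reach_from_root u unfolding phi_E_def reach_def by simp
next
  case False
  have "\<not> le r x"
    using False po x root_in_X le_root[OF x] unfolding partial_order_on_set_def by blast
  then obtain y z where "(y, z) \<in> E" "\<not> le y x" "le z x" "(z, u) \<in> E\<^sup>*"
    using rtrancl_first_entry[of r u E "\<lambda>v. le v x"] reach_from_root u by blast
  moreover from \<open>(y, z) \<in> E\<close> have "y \<in> X" "z \<in> X" using arcs_in_X by auto
  ultimately show ?thesis using phi_E_nonroot[OF False] unfolding reach_def by blast
qed

lemma reach_from_phi_E_imp_le:
  assumes x: "x \<in> X" and z: "z \<in> phi_E X le E r x" and zu: "reach E z u"
  shows "le u x"
proof -
  have "z \<in> X" "le z x"
    using z le_root[OF x] root_in_X phi_E_nonroot unfolding phi_E_def by (auto split: if_splits)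
  moreover have "u \<in> X" "le u z" using reach_le[OF \<open>z \<in> X\<close>] zu unfolding reach_def by auto
  ultimately show ?thesis using po x unfolding partial_order_on_set_def by blast
qed

end

theorem lemma2:
  fixes X :: "'a set" and le :: "'a \<Rightarrow> 'a \<Rightarrow> bool" and E :: "('a \<times> 'a) set" and r :: 'a
  assumes "finite X"
    and "partial_order_on_set X le"
    and "derivation_out_tree X le E r"
  shows "tree_based_enforcement_scheme X le E r (phi_E X le E r)"
  unfolding tree_based_enforcement_scheme_def
  using assms(3) phi_E_subset[OF assms(2,3)] self_mem_phi_E[OF assms(2,3)]
    le_imp_reach_from_phi_E[OF assms(2,3)] reach_from_phi_E_imp_le[OF assms(2,3)]
  by blast

end
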